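(* For every $n\ge1$, among all pairs $(S,\sigma)$ with $S\subset\mathbb{Z}_{>0}$ finite of cardinality $n$ and $\sigma$ a permutation of $S$, the identity permutation of $S_n=\{1,\dots,n\}$ is the unique one minimizing $v(\sigma,\Psi)$.
   Context: Let $p$ be a prime and $y\in\mathbb{Z}_p$ not a non-negative integer, with $p$-adic digits $y=\sum_{n\ge0}y_np^n$, $0\le y_n<p$. Let $\pi,\theta$ be indeterminates and $\beta=\prod_{n\ge0}(1-\pi^{p^n}\theta)^{y_n}\in\mathbb{F}_p[[\pi]][[\theta]]$, written $\beta=\sum_{n\ge0}a_n\theta^n$; put $a_n=0$ for $n<0$. Let $\Psi$ be the $\mathbb{Z}_{>0}\times\mathbb{Z}_{>0}$ matrix with $\Psi_{m_1,m_2}=a_{pm_1-m_2}$. For a finite $S\subset\mathbb{Z}_{>0}$ and permutation $\sigma$ of $S$, $v(\sigma,\Psi)=\sum_{k\in S}v_\pi(\Psi_{k,\sigma(k)})\in\mathbb{Z}_{\ge0}\cup\{\infty\}$, where $v_\pi$ is the $\pi$-adic valuation with $v_\pi(0)=\infty$. *)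

theory Defs
  imports "HOL-Library.Extended_Nat" "HOL-Combinatorics.Permutations" "HOL-Library.FuncSet"
    "HOL-Computational_Algebra.Primes"
begin

text \<open>A p-adic integer y is represented by its digit sequence y_n (0 \<le> y_n < p).
  y is a non-negative integer iff only finitely many digits are nonzero.\<close>

definition padic_digits :: "nat \<Rightarrow> (nat \<Rightarrow> nat) \<Rightarrow> bool" where
  "padic_digits p y \<longleftrightarrow> (\<forall>n. y n < p)"

definition not_nonneg_int :: "(nat \<Rightarrow> nat) \<Rightarrow> bool" where
  "not_nonneg_int y \<longleftrightarrow> infinite {n. y n \<noteq> 0}"

text \<open>beta = prod_n (1 - pi^(p^n) theta)^(y_n) = sum_m a_m theta^m.
  Expanding each factor binomially, (1 - pi^(p^n) theta)^(y_n)
  = sum_k (-1)^k (y_n choose k) pi^(k p^n) theta^k, so the coefficient of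
  pi^e theta^m in beta is the (integer, to be reduced mod p) sum over exponent
  choices k_n with sum_n k_n = m and sum_n k_n p^n = e.  Since p \<ge> 2,
  only indices n \<le> e and values k_n \<le> m can occur.\<close>

definition beta_coeff :: "nat \<Rightarrow> (nat \<Rightarrow> nat) \<Rightarrow> nat \<Rightarrow> nat \<Rightarrow> int" where
  "beta_coeff p y m e =
     (\<Sum>k \<in> {k \<in> {..e} \<rightarrow>\<^sub>E {..m}. (\<Sum>i\<le>e. k i) = m \<and> (\<Sum>i\<le>e. k i * p ^ i) = e}.
        \<Prod>i\<le>e. (-1) ^ k i * int (y i choose k i))"

text \<open>pi-adic valuation of a_m in F_p[[pi]] (a_m = 0 for m < 0), with v(0) = \<infinity>.\<close>

definition val_a :: "nat \<Rightarrow> (nat \<Rightarrow> nat) \<Rightarrow> int \<Rightarrow> enat" where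
  "val_a p y m =
     (if m < 0 then \<infinity>
      else if \<exists>e. \<not> int p dvd beta_coeff p y (nat m) e
           then enat (LEAST e. \<not> int p dvd beta_coeff p y (nat m) e)
           else \<infinity>)"

definition val_Psi :: "nat \<Rightarrow> (nat \<Rightarrow> nat) \<Rightarrow> nat \<Rightarrow> nat \<Rightarrow> enat" where
  "val_Psi p y m1 m2 = val_a p y (int p * int m1 - int m2)"

definition v_perm :: "nat \<Rightarrow> (nat \<Rightarrow> nat) \<Rightarrow> nat set \<Rightarrow> (nat \<Rightarrow> nat) \<Rightarrow> enat" where
  "v_perm p y S \<sigma> = (\<Sum>k\<in>S. val_Psi p y k (\<sigma> k))"

end

theory Submission
  imports Defs
begin

(*
  Write m = \<Sum>n k_n with 0 \<le> k_n \<le> y_n.  The coefficient of \<theta>^m in \<beta> is a signed sum of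
  \<Prod>n (y_n choose k_n) \<pi>^(\<Sum>n k_n p^n), so the smallest possible \<pi>-exponent is attained
  uniquely by the greedy choice that fills the lowest digits first; as every y_n < p, its
  coefficient is a product of binomials prime to p.  Hence v(a_m) = g(m) := \<Sum>j<m p^l(j),
  where l(j) is the digit receiving the (j+1)-st unit of the greedy filling.  The increments
  p^l(j) of g are nondecreasing and strictly grow over any p consecutive steps, as no digit
  holds p units.  By this discrete convexity, composing \<sigma> with a transposition so that it fixes
  M = max S strictly lowers v(\<sigma>, \<Psi>) = \<Sum>k g(pk - \<sigma> k) unless \<sigma> M = M already; the fixed
  point then costs g(pM - M) \<ge> g((p - 1)(n + 1)), and induction on |S| shows that the identity
  of {1..n} is the unique minimiser.
*)

section \<open>Permutation costs under a gap-convex weight\<close>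

locale gap_convex =
  fixes p :: nat and g :: "nat \<Rightarrow> nat"
  assumes two_le_p: "2 \<le> p"
    and strict_mono_g: "strict_mono g"
    and gap_exchange: "a + p \<le> b \<Longrightarrow> 0 < d \<Longrightarrow> g (a + d) + g b < g (b + d) + g a"
begin

definition perm_cost :: "nat set \<Rightarrow> (nat \<Rightarrow> nat) \<Rightarrow> nat" where
  "perm_cost S \<sigma> = (\<Sum>k\<in>S. g (p * k - \<sigma> k))"

lemma transpose_max_bound:
  assumes perm: "\<sigma> permutes S" and bound: "\<forall>k\<in>S. \<sigma> k \<le> p * k"
    and M: "M \<in> S" "\<forall>k\<in>S. k \<le> M" and k: "k \<in> S - {M}"
  shows "(transpose M (\<sigma> M) \<circ> \<sigma>) k \<le> p * k"
proof (cases "\<sigma> k = M")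
  case True
  then have "(transpose M (\<sigma> M) \<circ> \<sigma>) k = \<sigma> M" by simp
  also have "\<dots> \<le> \<sigma> k" using True M permutes_in_image[OF perm] by simp
  also have "\<dots> \<le> p * k" using bound k by simp
  finally show ?thesis .
next
  case False
  have "\<sigma> k \<noteq> \<sigma> M" using k M(1) permutes_inj_on[OF perm] by (auto dest: inj_onD)
  then show ?thesis using False bound k by (simp add: transpose_def)
qed

lemma perm_cost_transpose_max_less:
  assumes fin: "finite S" and perm: "\<sigma> permutes S" and bound: "\<forall>k\<in>S. \<sigma> k \<le> p * k"
    and M: "M \<in> S" "\<forall>k\<in>S. k \<le> M" and moved: "\<sigma> M \<noteq> M"
  shows "g (p * M - M) + perm_cost (S - {M}) (transpose M (\<sigma> M) \<circ> \<sigma>) < perm_cost S \<sigma>"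
proof -
  define \<tau> where "\<tau> = transpose M (\<sigma> M) \<circ> \<sigma>"
  obtain k' where k': "k' \<in> S" "\<sigma> k' = M"
    using M(1) permutes_image[OF perm] by (metis imageE)
  moreover have "k' \<noteq> M" using k' moved by auto
  ultimately have k'_lt: "k' < M" and k'_in: "k' \<in> S - {M}"
    using M(2) by (simp_all add: le_neq_implies_less)
  have \<sigma>M_lt: "\<sigma> M < M" using M moved permutes_in_image[OF perm] by (simp add: le_neq_implies_less)
  have M_le: "M \<le> p * k'" using bound k' by auto
  have \<tau>_other: "\<tau> k = \<sigma> k" if "k \<in> S - {M, k'}" for k
  proof -
    have "\<sigma> k \<noteq> \<sigma> k'" "\<sigma> k \<noteq> \<sigma> M"
      using that k' M permutes_inj_on[OF perm] by (auto dest: inj_onD)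
    then show ?thesis by (simp add: \<tau>_def k' transpose_def)
  qed
  define R where "R = (\<Sum>k\<in>S - {M, k'}. g (p * k - \<sigma> k))"
  have "perm_cost S \<sigma> = g (p * M - \<sigma> M) + g (p * k' - M) + R"
    unfolding perm_cost_def R_def using fin M(1) k'_in k'
      by (simp add: sum.remove Diff_insert2[symmetric])
  moreover have "perm_cost (S - {M}) \<tau> = g (p * k' - \<sigma> M) + R"
    unfolding perm_cost_def R_def using fin k'_in k' \<tau>_other
    by (simp add: \<tau>_def sum.remove Diff_insert2[symmetric])
  moreover
  have "g ((p * k' - M) + (M - \<sigma> M)) + g (p * M - M) < g ((p * M - M) + (M - \<sigma> M)) + g (p * k' - M)"
  proof (rule gap_exchange)
    have "p * k' + p \<le> p * M" using k'_lt mult_le_mono2[of "Suc k'" M p] by simp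
    then show "p * k' - M + p \<le> p * M - M" using M_le by simp
  qed (use \<sigma>M_lt in simp)
  moreover have "M \<le> p * M" using two_le_p by simp
  then have "p * M - M + (M - \<sigma> M) = p * M - \<sigma> M" and "p * k' - M + (M - \<sigma> M) = p * k' - \<sigma> M"
    using \<sigma>M_lt M_le by simp_all
  ultimately show ?thesis unfolding \<tau>_def by simp
qed

lemma perm_cost_remove_max:
  assumes fin: "finite S" and perm: "\<sigma> permutes S" and bound: "\<forall>k\<in>S. \<sigma> k \<le> p * k"
    and M: "M \<in> S" "\<forall>k\<in>S. k \<le> M"
  defines "\<tau> \<equiv> transpose M (\<sigma> M) \<circ> \<sigma>"
  shows "\<tau> permutes S - {M}" and "\<forall>k\<in>S - {M}. \<tau> k \<le> p * k"
    and "g (p * M - M) + perm_cost (S - {M}) \<tau> \<le> perm_cost S \<sigma>"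
    and "g (p * M - M) + perm_cost (S - {M}) \<tau> = perm_cost S \<sigma> \<Longrightarrow> \<sigma> M = M"
proof -
  show "\<tau> permutes S - {M}"
    unfolding \<tau>_def by (rule permutes_insert_lemma) (use perm M in \<open>simp add: insert_absorb\<close>)
  show "\<forall>k\<in>S - {M}. \<tau> k \<le> p * k"
    unfolding \<tau>_def using transpose_max_bound[OF perm bound M] by blast
  have fixed: "g (p * M - M) + perm_cost (S - {M}) \<tau> = perm_cost S \<sigma>" if "\<sigma> M = M"
    using that fin M(1) by (simp add: \<tau>_def perm_cost_def sum.remove)
  show "g (p * M - M) + perm_cost (S - {M}) \<tau> \<le> perm_cost S \<sigma>"
    using fixed perm_cost_transpose_max_less[OF fin perm bound M]
      by (cases "\<sigma> M = M") (simp_all add: \<tau>_def)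
  show "\<sigma> M = M" if "g (p * M - M) + perm_cost (S - {M}) \<tau> = perm_cost S \<sigma>"
    using that perm_cost_transpose_max_less[OF fin perm bound M] by (auto simp: \<tau>_def)
qed

lemma perm_cost_identity_minimal:
  assumes "finite S" "0 \<notin> S" "card S = n" "\<sigma> permutes S" "\<forall>k\<in>S. \<sigma> k \<le> p * k"
  shows "perm_cost {1..n} id \<le> perm_cost S \<sigma> \<and>
    (perm_cost S \<sigma> = perm_cost {1..n} id \<longrightarrow> S = {1..n} \<and> \<sigma> = id)"
  using assms
proof (induction n arbitrary: S \<sigma>)
  case 0
  then show ?case by simp
next
  case (Suc n)
  define M where "M = Max S"
  define \<tau> where "\<tau> = transpose M (\<sigma> M) \<circ> \<sigma>"
  have "S \<noteq> {}" using Suc.prems(3) by auto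
  then have M: "M \<in> S" "\<forall>k\<in>S. k \<le> M" using Suc.prems(1) by (simp_all add: M_def)
  have "S \<subseteq> {1..M}" using M Suc.prems(2) by (auto simp: Suc_le_eq intro: gr0I)
  then have n_lt_M: "n < M" using card_mono[of "{1..M}" S] Suc.prems(3) by simp
  note remove = perm_cost_remove_max[OF Suc.prems(1,4,5) M, folded \<tau>_def]
  have S': "finite (S - {M})" "0 \<notin> S - {M}" "card (S - {M}) = n"
    using Suc.prems(1-3) M(1) by auto
  note IH = Suc.IH[OF S' remove(1,2)]
  have id_cost: "perm_cost {1..Suc n} id = perm_cost {1..n} id + g (p * Suc n - Suc n)"
    by (simp add: perm_cost_def)
  have "(p - 1) * Suc n \<le> (p - 1) * M" using n_lt_M by (intro mult_le_mono2) simp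
  then have g_le: "g (p * Suc n - Suc n) \<le> g (p * M - M)"
    using strict_mono_g by (simp add: diff_mult_distrib strict_mono_less_eq)
  show ?case
  proof
    show "perm_cost {1..Suc n} id \<le> perm_cost S \<sigma>" using id_cost IH g_le remove(3) by linarith
    show "perm_cost S \<sigma> = perm_cost {1..Suc n} id \<longrightarrow> S = {1..Suc n} \<and> \<sigma> = id"
    proof
      assume "perm_cost S \<sigma> = perm_cost {1..Suc n} id"
      then have g_eq: "g (p * Suc n - Suc n) = g (p * M - M)"
        and rest_eq: "perm_cost (S - {M}) \<tau> = perm_cost {1..n} id"
        and "g (p * M - M) + perm_cost (S - {M}) \<tau> = perm_cost S \<sigma>"
        using id_cost IH g_le remove(3) by linarith+
      then have "\<sigma> M = M" by (intro remove(4))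
      then have "\<tau> = \<sigma>" by (simp add: \<tau>_def)
      moreover have S'_eq: "S - {M} = {1..n}" and "\<tau> = id" using IH rest_eq by blast+
      ultimately have "\<sigma> = id" by simp
      have "M = Suc n"
      proof (rule ccontr)
        assume "M \<noteq> Suc n"
        then have "(p - 1) * Suc n < (p - 1) * M" using n_lt_M two_le_p
          by (intro mult_less_mono2) auto
        then have "g (p * Suc n - Suc n) < g (p * M - M)"
          using strict_mono_g by (simp add: diff_mult_distrib strict_mono_less)
        then show False using g_eq by simp
      qed
      then have "S = insert (Suc n) {1..n}" using S'_eq M(1) by auto
      with \<open>\<sigma> = id\<close> show "S = {1..Suc n} \<and> \<sigma> = id" by auto
    qed
  qed
qed

end

section \<open>Greedy fillings of the digits\<close>

definition digit_prefix :: "(nat \<Rightarrow> nat) \<Rightarrow> nat \<Rightarrow> nat" where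
  "digit_prefix y i = (\<Sum>l<i. y l)"

definition greedy_digits :: "(nat \<Rightarrow> nat) \<Rightarrow> nat \<Rightarrow> nat \<Rightarrow> nat" where
  "greedy_digits y m i = min (y i) (m - digit_prefix y i)"

definition digit_level :: "(nat \<Rightarrow> nat) \<Rightarrow> nat \<Rightarrow> nat" where
  "digit_level y m = (LEAST l. m < digit_prefix y (Suc l))"

lemma digit_prefix_0 [simp]: "digit_prefix y 0 = 0"
  by (simp add: digit_prefix_def)

lemma digit_prefix_Suc [simp]: "digit_prefix y (Suc i) = digit_prefix y i + y i"
  by (simp add: digit_prefix_def)

lemma digit_prefix_mono: "i \<le> j \<Longrightarrow> digit_prefix y i \<le> digit_prefix y j"
  unfolding digit_prefix_def by (rule sum_mono2) auto

lemma digit_prefix_unbounded: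
  assumes "not_nonneg_int y"
  shows "\<exists>N. m < digit_prefix y N"
proof -
  have nonzero_beyond: "\<exists>j\<ge>N. y j \<noteq> 0" for N
    using assms unfolding not_nonneg_int_def infinite_nat_iff_unbounded_le by auto
  show ?thesis
  proof (induction m)
    case 0
    obtain j where "y j \<noteq> 0" using nonzero_beyond by blast
    then have "0 < digit_prefix y (Suc j)" by simp
    then show ?case by blast
  next
    case (Suc m)
    then obtain N where N: "m < digit_prefix y N" by blast
    obtain j where "j \<ge> N" "y j \<noteq> 0" using nonzero_beyond by blast
    then have "Suc m < digit_prefix y (Suc j)" using N digit_prefix_mono[of N j y] by simp
    then show ?case by blast
  qed
qed

lemma digit_level_bounds:
  assumes "m < digit_prefix y N"
  shows "digit_level y m < N"
    and "digit_prefix y (digit_level y m) \<le> m"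
    and "m < digit_prefix y (Suc (digit_level y m))"
proof -
  obtain l where N: "N = Suc l" using assms by (cases N) auto
  show "m < digit_prefix y (Suc (digit_level y m))"
    unfolding digit_level_def by (rule LeastI[of _ l]) (use assms N in simp)
  show "digit_level y m < N"
    unfolding digit_level_def N by (rule le_imp_less_Suc, rule Least_le) (use assms N in simp)
  show "digit_prefix y (digit_level y m) \<le> m"
  proof (cases "digit_level y m")
    case (Suc l')
    then have "\<not> m < digit_prefix y (Suc l')"
      unfolding digit_level_def by (metis lessI not_less_Least)
    then show ?thesis using Suc by simp
  qed simp
qed

lemma digit_level_mono:
  assumes "m \<le> m'" "m' < digit_prefix y N"
  shows "digit_level y m \<le> digit_level y m'"
  unfolding digit_level_def[of y m]
  by (rule Least_le) (use digit_level_bounds(3)[OF assms(2)] assms(1) in simp)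

lemma greedy_digits_le: "greedy_digits y m i \<le> y i" "greedy_digits y m i \<le> m"
  by (simp_all add: greedy_digits_def)

lemma greedy_digits_Suc:
  assumes "m < digit_prefix y N"
  shows "greedy_digits y (Suc m) i = greedy_digits y m i + (if i = digit_level y m then 1 else 0)"
proof -
  note level = digit_level_bounds(2,3)[OF assms]
  consider "i < digit_level y m" | "i = digit_level y m" | "digit_level y m < i"
    by linarith
  then show ?thesis
  proof cases
    case 1
    then have "digit_prefix y (Suc i) \<le> m"
      using level digit_prefix_mono[of "Suc i" "digit_level y m" y] by simp
    then show ?thesis using 1 by (simp add: greedy_digits_def)
  next
    case 3
    then have "m < digit_prefix y i"
      using level digit_prefix_mono[of "Suc (digit_level y m)" i y] by simp
    then show ?thesis using 3 by (simp add: greedy_digits_def)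
  qed (use level in \<open>simp add: greedy_digits_def\<close>)
qed

lemma sum_greedy_digits_mult:
  assumes "m \<le> digit_prefix y N"
  shows "(\<Sum>i<N. greedy_digits y m i * w i) = (\<Sum>j<m. w (digit_level y j))"
  using assms
proof (induction m)
  case 0
  then show ?case by (simp add: greedy_digits_def)
next
  case (Suc m)
  then have m_lt: "m < digit_prefix y N" by simp
  have "(\<Sum>i<N. greedy_digits y (Suc m) i * w i)
      = (\<Sum>i<N. greedy_digits y m i * w i + (if i = digit_level y m then w i else 0))"
    by (rule sum.cong) (simp_all add: greedy_digits_Suc[OF m_lt] algebra_simps)
  also have "\<dots> = (\<Sum>i<N. greedy_digits y m i * w i) + w (digit_level y m)"
    using digit_level_bounds(1)[OF m_lt] by (simp add: sum.distrib)
  finally show ?case using Suc m_lt by simp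
qed

lemma sum_greedy_digits_prefix: "(\<Sum>l<i. greedy_digits y m l) = min m (digit_prefix y i)"
  by (induction i) (auto simp: greedy_digits_def)

lemma sum_mult_eq_sum_tails:
  fixes k w :: "nat \<Rightarrow> nat"
  assumes "mono w"
  shows "(\<Sum>i<N. k i * w i) = (\<Sum>i<N. (w i - (if i = 0 then 0 else w (i - 1))) * (\<Sum>l=i..<N. k l))"
proof (induction N)
  case (Suc N)
  define \<delta> where "\<delta> i = w i - (if i = 0 then 0 else w (i - 1))" for i
  have telescope: "(\<Sum>i<Suc n. \<delta> i) = w n" for n
    by (induction n) (use \<open>mono w\<close> in \<open>auto simp: \<delta>_def monoD\<close>)
  have "(\<Sum>i<Suc N. \<delta> i * (\<Sum>l=i..<Suc N. k l))
      = (\<Sum>i<Suc N. \<delta> i * (\<Sum>l=i..<N. k l) + \<delta> i * k N)"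
    by (rule sum.cong) (auto simp: algebra_simps)
  also have "\<dots> = (\<Sum>i<N. \<delta> i * (\<Sum>l=i..<N. k l)) + k N * w N"
    by (simp add: sum.distrib sum_distrib_right[symmetric] telescope mult.commute
        del: sum.lessThan_Suc) simp
  finally show ?case using Suc.IH by (simp add: \<delta>_def)
qed simp

lemma sum_le_digit_prefix: "\<forall>i<N. k i \<le> y i \<Longrightarrow> (\<Sum>i<N. k i) \<le> digit_prefix y N"
  unfolding digit_prefix_def by (rule sum_mono) simp

lemma greedy_digits_tail_le:
  assumes k_le: "\<forall>i<N. k i \<le> y i" and k_sum: "(\<Sum>i<N. k i) = m" and i: "i \<le> N"
  shows "(\<Sum>l=i..<N. greedy_digits y m l) \<le> (\<Sum>l=i..<N. k l)"
proof -
  have split: "(\<Sum>l<N. h l) = (\<Sum>l<i. h l) + (\<Sum>l=i..<N. h l)" for h :: "nat \<Rightarrow> nat"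
    using i by (simp add: sum.atLeastLessThan_concat[of 0 i N, simplified atLeast0LessThan])
  have "(\<Sum>l<i. k l) \<le> m" using split[of k] k_sum by simp
  moreover have "(\<Sum>l<i. k l) \<le> digit_prefix y i"
    using k_le i by (intro sum_le_digit_prefix) simp
  moreover have "(\<Sum>l<N. greedy_digits y m l) = m"
    using sum_le_digit_prefix[OF k_le] k_sum by (simp add: sum_greedy_digits_prefix)
  ultimately have "(\<Sum>l<i. k l) \<le> (\<Sum>l<i. greedy_digits y m l)"
    by (simp add: sum_greedy_digits_prefix)
  then show ?thesis
    using split[of k] split[of "greedy_digits y m"] k_sum \<open>(\<Sum>l<N. greedy_digits y m l) = m\<close>
    by linarith
qed

lemma greedy_digits_minimize:
  fixes k w :: "nat \<Rightarrow> nat"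
  assumes w: "strict_mono w" and k_le: "\<forall>i<N. k i \<le> y i" and k_sum: "(\<Sum>i<N. k i) = m"
  shows "(\<Sum>i<N. greedy_digits y m i * w i) \<le> (\<Sum>i<N. k i * w i)"
    and "(\<Sum>i<N. k i * w i) = (\<Sum>i<N. greedy_digits y m i * w i) \<Longrightarrow> \<forall>i<N. k i = greedy_digits y m i"
proof -
  define g where "g = greedy_digits y m"
  define \<delta> where "\<delta> i = w i - (if i = 0 then 0 else w (i - 1))" for i
  define tail where "tail h i = (\<Sum>l=i..<N. h l)" for h :: "nat \<Rightarrow> nat" and i
  have abel: "(\<Sum>i<N. h i * w i) = (\<Sum>i<N. \<delta> i * tail h i)" for h
    unfolding \<delta>_def tail_def using strict_mono_mono[OF w] by (rule sum_mult_eq_sum_tails)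
  have termwise: "\<delta> i * tail g i \<le> \<delta> i * tail k i" if "i \<in> {..<N}" for i
    using greedy_digits_tail_le[OF k_le k_sum, of i] that by (simp add: g_def tail_def)
  show "(\<Sum>i<N. greedy_digits y m i * w i) \<le> (\<Sum>i<N. k i * w i)"
    unfolding g_def[symmetric] abel using termwise by (rule sum_mono)
  assume "(\<Sum>i<N. k i * w i) = (\<Sum>i<N. greedy_digits y m i * w i)"
  then have "(\<Sum>i<N. \<delta> i * tail g i) = (\<Sum>i<N. \<delta> i * tail k i)"
    unfolding g_def[symmetric] abel by simp
  note termwise_eq = sum_mono_inv[OF this termwise]
  have tail_eq: "tail k i = tail g i" if "i < N" for i
  proof (cases i)
    case 0
    have "(\<Sum>l<N. g l) = m"
      using sum_le_digit_prefix[OF k_le] k_sum by (simp add: g_def sum_greedy_digits_prefix)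
    then show ?thesis using 0 k_sum by (simp add: tail_def atLeast0LessThan)
  next
    case (Suc i')
    then have "0 < \<delta> i" using w by (simp add: \<delta>_def strict_mono_def)
    then show ?thesis using termwise_eq[of i] that by simp
  qed
  show "\<forall>i<N. k i = greedy_digits y m i"
  proof (intro allI impI)
    fix i assume "i < N"
    have "tail h i = h i + tail h (Suc i)" for h
      unfolding tail_def using \<open>i < N\<close> by (simp add: sum.atLeast_Suc_lessThan)
    moreover have "tail k (Suc i) = tail g (Suc i)"
      using tail_eq[of "Suc i"] \<open>i < N\<close> by (cases "Suc i = N") (simp_all add: tail_def)
    ultimately show "k i = greedy_digits y m i" using tail_eq[OF \<open>i < N\<close>] g_def by simp
  qed
qed

section \<open>The valuation of the coefficients of \<beta>\<close>

definition greedy_cost :: "nat \<Rightarrow> (nat \<Rightarrow> nat) \<Rightarrow> nat \<Rightarrow> nat" where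
  "greedy_cost p y m = (\<Sum>j<m. p ^ digit_level y j)"

lemma greedy_cost_le_weighted_sum:
  assumes p: "2 \<le> p" and k_le: "\<forall>i<N. k i \<le> y i" and k_sum: "(\<Sum>i<N. k i) = m"
  shows "greedy_cost p y m \<le> (\<Sum>i<N. k i * p ^ i)"
    and "(\<Sum>i<N. k i * p ^ i) = greedy_cost p y m \<Longrightarrow> \<forall>i<N. k i = greedy_digits y m i"
proof -
  have "m \<le> digit_prefix y N" using sum_le_digit_prefix[OF k_le] k_sum by simp
  then have greedy: "(\<Sum>i<N. greedy_digits y m i * p ^ i) = greedy_cost p y m"
    unfolding greedy_cost_def by (rule sum_greedy_digits_mult)
  have "strict_mono (\<lambda>i. p ^ i)" using p by (simp add: strict_mono_def power_strict_increasing)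
  note minimize = greedy_digits_minimize[OF this k_le k_sum, unfolded greedy]
  show "greedy_cost p y m \<le> (\<Sum>i<N. k i * p ^ i)" by (rule minimize(1))
  show "(\<Sum>i<N. k i * p ^ i) = greedy_cost p y m \<Longrightarrow> \<forall>i<N. k i = greedy_digits y m i"
    by (rule minimize(2))
qed

lemma le_digit_prefix_greedy_cost:
  assumes p: "2 \<le> p" and y: "not_nonneg_int y"
  shows "m \<le> digit_prefix y (Suc (greedy_cost p y m))"
proof (cases m)
  case (Suc m')
  define l where "l = digit_level y m'"
  obtain N where "m' < digit_prefix y N" using digit_prefix_unbounded[OF y] by blast
  then have "m \<le> digit_prefix y (Suc l)" using Suc digit_level_bounds(3)
    by (simp add: l_def Suc_le_eq)
  have "l < 2 ^ l" by (rule less_exp)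
  also have "\<dots> \<le> p ^ l" using p by (simp add: power_mono)
  also have "\<dots> \<le> greedy_cost p y m"
    unfolding greedy_cost_def l_def Suc by (rule member_le_sum) auto
  finally have "digit_prefix y (Suc l) \<le> digit_prefix y (Suc (greedy_cost p y m))"
    by (intro digit_prefix_mono) simp
  with \<open>m \<le> digit_prefix y (Suc l)\<close> show ?thesis by simp
qed simp

lemma beta_coeff_below_greedy_cost:
  assumes p: "2 \<le> p" and e: "e < greedy_cost p y m"
  shows "beta_coeff p y m e = 0"
  unfolding beta_coeff_def
proof (rule sum.neutral, intro ballI)
  fix k assume k: "k \<in> {k \<in> {..e} \<rightarrow>\<^sub>E {..m}. (\<Sum>i\<le>e. k i) = m \<and> (\<Sum>i\<le>e. k i * p ^ i) = e}"
  have "\<not> (\<forall>i<Suc e. k i \<le> y i)"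
  proof
    assume "\<forall>i<Suc e. k i \<le> y i"
    from greedy_cost_le_weighted_sum(1)[OF p this] k e show False
      by (simp add: lessThan_Suc_atMost)
  qed
  then obtain i where "i \<le> e" "y i < k i" by (auto simp: less_Suc_eq_le not_le)
  then show "(\<Prod>i\<le>e. (-1) ^ k i * int (y i choose k i)) = 0"
    by (intro prod_zero) auto
qed

lemma beta_coeff_at_greedy_cost:
  fixes m :: nat
  assumes p: "2 \<le> p" and y: "not_nonneg_int y"
  defines "E \<equiv> greedy_cost p y m"
  shows "beta_coeff p y m E =
    (\<Prod>i\<le>E. (-1) ^ greedy_digits y m i * int (y i choose greedy_digits y m i))"
proof -
  define K where "K = {k \<in> {..E} \<rightarrow>\<^sub>E {..m}. (\<Sum>i\<le>E. k i) = m \<and> (\<Sum>i\<le>E. k i * p ^ i) = E}"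
  define F where "F k = (\<Prod>i\<le>E. (-1) ^ k i * int (y i choose k i))" for k
  define g where "g = restrict (greedy_digits y m) {..E}"
  have m_le: "m \<le> digit_prefix y (Suc E)" unfolding E_def
    by (rule le_digit_prefix_greedy_cost[OF p y])
  have g_PiE: "g \<in> {..E} \<rightarrow>\<^sub>E {..m}" by (simp add: g_def restrict_PiE_iff greedy_digits_le)
  have g_sum: "(\<Sum>i\<le>E. g i * w i) = (\<Sum>i<Suc E. greedy_digits y m i * w i)" for w
    unfolding g_def lessThan_Suc_atMost by (rule sum.cong) auto
  have "(\<Sum>i\<le>E. g i) = m"
    using g_sum[of "\<lambda>_. 1"] sum_greedy_digits_prefix[of y m "Suc E"] m_le by simp
  moreover have "(\<Sum>i\<le>E. g i * p ^ i) = E"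
    using g_sum sum_greedy_digits_mult[OF m_le, of "\<lambda>i. p ^ i"] by (simp add: E_def greedy_cost_def)
  ultimately have "g \<in> K" using g_PiE by (simp add: K_def)
  have "F k = 0" if k: "k \<in> K - {g}" for k
  proof (cases "\<forall>i<Suc E. k i \<le> y i")
    case True
    have k_sum: "(\<Sum>i<Suc E. k i) = m" using k by (simp add: K_def lessThan_Suc_atMost)
    have "(\<Sum>i<Suc E. k i * p ^ i) = greedy_cost p y m"
      using k by (simp add: K_def E_def[symmetric] lessThan_Suc_atMost)
    then have "\<forall>i<Suc E. k i = greedy_digits y m i"
      by (rule greedy_cost_le_weighted_sum(2)[OF p True k_sum])
    moreover have "k \<in> {..E} \<rightarrow>\<^sub>E {..m}" using k by (simp add: K_def)
    ultimately have "k = g" using g_PiE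
      by (intro PiE_ext[of k "{..E}"]) (simp_all add: g_def less_Suc_eq_le)
    then show ?thesis using k by simp
  next
    case False
    then obtain i where "i \<le> E" "y i < k i" by (auto simp: less_Suc_eq_le not_le)
    then show ?thesis unfolding F_def by (intro prod_zero) auto
  qed
  then have others: "(\<Sum>k\<in>K - {g}. F k) = 0" by simp
  have "finite K" by (rule finite_subset[of K "{..E} \<rightarrow>\<^sub>E {..m}"]) (auto simp: K_def finite_PiE)
  have "beta_coeff p y m E = (\<Sum>k\<in>K. F k)" by (simp add: beta_coeff_def K_def F_def)
  also have "\<dots> = F g" using sum.remove[OF \<open>finite K\<close> \<open>g \<in> K\<close>, of F] others by simp
  finally show ?thesis unfolding F_def g_def by simp
qed

lemma prime_not_dvd_choose:
  assumes "prime p" "n < p" "k \<le> n"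
  shows "\<not> p dvd (n choose k)"
proof
  assume "p dvd (n choose k)"
  then have "p dvd fact k * fact (n - k) * (n choose k)" by simp
  then have "p dvd fact n" using binomial_fact_lemma[OF assms(3)] by simp
  then show False using prime_dvd_fact_iff[OF assms(1)] assms(2) by simp
qed

lemma val_a_greedy_cost:
  assumes p: "prime p" and digits: "padic_digits p y" and y: "not_nonneg_int y"
  shows "val_a p y (int m) = enat (greedy_cost p y m)"
proof -
  define E where "E = greedy_cost p y m"
  have p2: "2 \<le> p" using p by (rule prime_ge_2_nat)
  have "\<not> int p dvd beta_coeff p y m E"
  proof
    assume "int p dvd beta_coeff p y m E"
    then obtain i where "i \<le> E"
      and "int p dvd (-1) ^ greedy_digits y m i * int (y i choose greedy_digits y m i)"
      using p by (auto simp: beta_coeff_at_greedy_cost[OF p2 y] E_def prime_dvd_prod_iff)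
    then have "p dvd (y i choose greedy_digits y m i)"
      by (simp add: dvd_mult_unit_iff' is_unit_power_iff)
    then show False
      using prime_not_dvd_choose[OF p] digits greedy_digits_le by (auto simp: padic_digits_def)
  qed
  moreover have "E \<le> e" if "\<not> int p dvd beta_coeff p y m e" for e
    using that beta_coeff_below_greedy_cost[OF p2, of e y m] E_def by fastforce
  ultimately have "(LEAST e. \<not> int p dvd beta_coeff p y m e) = E"
    by (intro Least_equality)
  with \<open>\<not> int p dvd beta_coeff p y m E\<close> show ?thesis by (auto simp: val_a_def E_def)
qed

section \<open>Gap convexity of the valuation\<close>

lemma digit_level_gap:
  assumes digits: "padic_digits p y" and gap: "m + p \<le> m'" and m': "m' < digit_prefix y N"
  shows "digit_level y m < digit_level y m'"
proof -
  have "digit_level y m \<le> digit_level y m'" using gap m' by (intro digit_level_mono) simp_all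
  moreover have "digit_level y m \<noteq> digit_level y m'"
  proof
    assume same: "digit_level y m = digit_level y m'"
    have "m < digit_prefix y N" using gap m' by simp
    then have "digit_prefix y (digit_level y m') \<le> m" using same digit_level_bounds(2) by metis
    moreover have "y (digit_level y m') < p" using digits by (simp add: padic_digits_def)
    ultimately show False using digit_level_bounds(3)[OF m'] gap by simp
  qed
  ultimately show ?thesis by simp
qed

lemma sum_increments_gap_exchange:
  fixes c :: "nat \<Rightarrow> nat"
  assumes mono: "mono c" and gap: "\<And>a b. a + p \<le> b \<Longrightarrow> c a < c b"
    and ab: "a + p \<le> b" and d: "0 < d"
  shows "(\<Sum>j<a + d. c j) + (\<Sum>j<b. c j) < (\<Sum>j<b + d. c j) + (\<Sum>j<a. c j)"
proof -
  have shift: "(\<Sum>j<x + d. c j) = (\<Sum>j<x. c j) + (\<Sum>j<d. c (x + j))" for x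
    by (induction d) simp_all
  have "(\<Sum>j<d. c (a + j)) < (\<Sum>j<d. c (b + j))"
  proof (rule sum_strict_mono_ex1)
    show "\<forall>j\<in>{..<d}. c (a + j) \<le> c (b + j)" using ab by (auto intro: monoD[OF mono])
    show "\<exists>j\<in>{..<d}. c (a + j) < c (b + j)" using gap[OF ab] d by (intro bexI[of _ 0]) simp_all
  qed simp
  then show ?thesis unfolding shift by simp
qed

lemma gap_convex_greedy_cost:
  assumes p: "prime p" and digits: "padic_digits p y" and y: "not_nonneg_int y"
  shows "gap_convex p (greedy_cost p y)"
proof
  show p2: "2 \<le> p" using p by (rule prime_ge_2_nat)
  show "strict_mono (greedy_cost p y)"
    unfolding strict_mono_Suc_iff greedy_cost_def using p2 by simp
  define c where "c j = p ^ digit_level y j" for j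
  have "mono c"
  proof
    fix m m' :: nat assume "m \<le> m'"
    obtain N where "m' < digit_prefix y N" using digit_prefix_unbounded[OF y] by blast
    then show "c m \<le> c m'" unfolding c_def using p2 \<open>m \<le> m'\<close>
      by (simp add: digit_level_mono power_increasing)
  qed
  moreover have "c m < c m'" if "m + p \<le> m'" for m m'
  proof -
    obtain N where "m' < digit_prefix y N" using digit_prefix_unbounded[OF y] by blast
    then show ?thesis
      unfolding c_def using p2 digit_level_gap[OF digits that] by (simp add: power_strict_increasing)
  qed
  ultimately show
    "greedy_cost p y (a + d) + greedy_cost p y b < greedy_cost p y (b + d) + greedy_cost p y a"
    if "a + p \<le> b" "0 < d" for a b d
    unfolding greedy_cost_def c_def[symmetric] using that by (rule sum_increments_gap_exchange)
qed

lemma val_Psi_greedy_cost: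
  assumes "prime p" "padic_digits p y" "not_nonneg_int y" and "j \<le> p * k"
  shows "val_Psi p y k j = enat (greedy_cost p y (p * k - j))"
proof -
  have "int p * int k - int j = int (p * k - j)" using \<open>j \<le> p * k\<close> by simp
  then show ?thesis by (simp add: val_Psi_def val_a_greedy_cost[OF assms(1-3)])
qed

lemma val_Psi_infinite: "p * k < j \<Longrightarrow> val_Psi p y k j = \<infinity>"
  by (simp add: val_Psi_def val_a_def flip: of_nat_mult)

lemma v_perm_greedy_cost:
  assumes "prime p" "padic_digits p y" "not_nonneg_int y" and "\<forall>k\<in>S. \<sigma> k \<le> p * k"
  shows "v_perm p y S \<sigma> = enat (\<Sum>k\<in>S. greedy_cost p y (p * k - \<sigma> k))"
proof -
  have "v_perm p y S \<sigma> = (\<Sum>k\<in>S. enat (greedy_cost p y (p * k - \<sigma> k)))"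
    unfolding v_perm_def using assms by (intro sum.cong) (simp_all add: val_Psi_greedy_cost)
  then show ?thesis by (simp flip: of_nat_eq_enat)
qed

lemma v_perm_infinite:
  assumes "finite S" "k \<in> S" "p * k < \<sigma> k"
  shows "v_perm p y S \<sigma> = \<infinity>"
  using assms by (simp add: v_perm_def sum.remove val_Psi_infinite)

theorem corollary5p8:
  fixes p :: nat and y :: "nat \<Rightarrow> nat" and n :: nat
  assumes "prime p" and "padic_digits p y" and "not_nonneg_int y" and "n \<ge> 1"
  shows "\<forall>S \<sigma>. finite S \<and> S \<subseteq> {0<..} \<and> card S = n \<and> \<sigma> permutes S \<longrightarrow>
           v_perm p y {1..n} id \<le> v_perm p y S \<sigma> \<and>
           (v_perm p y S \<sigma> = v_perm p y {1..n} id \<longrightarrow> S = {1..n} \<and> \<sigma> = id)"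
proof (intro allI impI, elim conjE)
  fix S :: "nat set" and \<sigma> :: "nat \<Rightarrow> nat"
  assume fin: "finite S" and pos: "S \<subseteq> {0<..}" and card: "card S = n" and perm: "\<sigma> permutes S"
  interpret gap_convex p "greedy_cost p y" using gap_convex_greedy_cost[OF assms(1-3)] .
  have "\<forall>k\<in>{1..n}. id k \<le> p * k" using two_le_p by simp
  then have v_id: "v_perm p y {1..n} id = enat (perm_cost {1..n} id)"
    by (simp add: v_perm_greedy_cost[OF assms(1-3)] perm_cost_def)
  show "v_perm p y {1..n} id \<le> v_perm p y S \<sigma> \<and>
    (v_perm p y S \<sigma> = v_perm p y {1..n} id \<longrightarrow> S = {1..n} \<and> \<sigma> = id)"
  proof (cases "\<forall>k\<in>S. \<sigma> k \<le> p * k")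
    case True
    have "v_perm p y S \<sigma> = enat (perm_cost S \<sigma>)"
      by (simp add: v_perm_greedy_cost[OF assms(1-3) True] perm_cost_def)
    moreover have "0 \<notin> S" using pos by auto
    ultimately show ?thesis using perm_cost_identity_minimal[OF fin _ card perm True] v_id by auto
  next
    case False
    then obtain k where "k \<in> S" "p * k < \<sigma> k" by (auto simp: not_le)
    then show ?thesis using v_perm_infinite[OF fin] v_id by simp
  qed
qed

end
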